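(* Let $p$ be a prime, $n>1$, $\alpha_0,\dots,\alpha_{n-1}\in\mathbb{L}_p$, and let $$A=\begin{pmatrix}0&1&0&\cdots&0\\0&0&1&\ddots&0\\\vdots&&\ddots&\ddots&0\\0&0&\cdots&0&1\\\alpha_0&\alpha_1&\cdots&\alpha_{n-2}&\alpha_{n-1}\end{pmatrix}\in\mathbb{L}_p^{n\times n}$$ (so that $A^T$ is the companion matrix of $-\alpha_0-\alpha_1t-\dots-\alpha_{n-1}t^{n-1}+t^n$). Let $\mathcal{F}$ be the linear cellular automaton over $(\mathbb{Z}/p\mathbb{Z})^n$ with associated matrix $A$. Then the following are equivalent: $\mathcal{F}$ is positively expansive; $A$ is expansive; $A^T$ is expansive; the polynomial $\alpha_0+\alpha_1t+\dots+\alpha_{n-1}t^{n-1}+t^n$ is expansive.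
   Context: $\mathbb{L}_p=\mathbb{Z}/p\mathbb{Z}[X,X^{-1}]$. The linear cellular automaton over $(\mathbb{Z}/p\mathbb{Z})^n$ with associated matrix $\sum_{j=-r}^rA_jX^{-j}$ ($A_j\in(\mathbb{Z}/p\mathbb{Z})^{n\times n}$) is the map $\mathcal{F}$ with $\mathcal{F}(c)_i=\sum_{j=-r}^rA_jc_{i+j}$ on $((\mathbb{Z}/p\mathbb{Z})^n)^{\mathbb{Z}}$, with metric $d(c,c')=2^{-\min\{|j|:c_j\neq c'_j\}}$ ($d(c,c)=0$); it is positively expansive if there is $\varepsilon>0$ such that for all $c\neq c'$ some $\ell\in\mathbb{N}$ gives $d(\mathcal{F}^\ell(c),\mathcal{F}^\ell(c'))\geq\varepsilon$. For nonzero $\alpha\in\mathbb{L}_p$, $\deg^+(\alpha)$ (resp. $\deg^-(\alpha)$) is the largest (resp. smallest) exponent with nonzero coefficient; $\deg^+(0)=-\infty$, $\deg^-(0)=+\infty$. A monic polynomial $\beta_0+\beta_1t+\dots+\beta_{n-1}t^{n-1}+t^n\in\mathbb{L}_p[t]$ is expansive if $\beta_0\neq0$, $\deg^+(\beta_0)>0$, $\deg^+(\beta_0)>\deg^+(\beta_i)$ for all $1\le i\le n-1$, $\deg^-(\beta_0)<0$ and $\deg^-(\beta_0)<\deg^-(\beta_i)$ for all $1\le i\le n-1$. A matrix $M\in\mathbb{L}_p^{n\times n}$ is expansive if $\det(tI_n-M)$ is expansive. *)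

theory Defs
  imports "Jordan_Normal_Form.Char_Poly" "Berlekamp_Zassenhaus.Finite_Field"
    "HOL-Computational_Algebra.Formal_Laurent_Series" "HOL-Library.Extended_Real"
begin

text \<open>Laurent polynomials over a ring: formal Laurent series with finitely many
  nonzero coefficients. Over Z/pZ this is L_p (take 'a = 'p mod_ring, 'p::prime_card).\<close>
definition is_lpoly :: "'a::zero fls \<Rightarrow> bool" where
  "is_lpoly f \<longleftrightarrow> finite {i. fls_nth f i \<noteq> 0}"

definition deg_plus :: "'a::zero fls \<Rightarrow> ereal" where
  "deg_plus f = (if f = 0 then -\<infinity> else ereal (of_int (Max {i. fls_nth f i \<noteq> 0})))"

definition deg_minus :: "'a::zero fls \<Rightarrow> ereal" where
  "deg_minus f = (if f = 0 then \<infinity> else ereal (of_int (Min {i. fls_nth f i \<noteq> 0})))"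

definition expansive_poly :: "'a::comm_ring_1 fls poly \<Rightarrow> bool" where
  "expansive_poly q \<longleftrightarrow>
     (\<forall>i. is_lpoly (Polynomial.coeff q i)) \<and> monic q \<and>
     Polynomial.coeff q 0 \<noteq> 0 \<and>
     deg_plus (Polynomial.coeff q 0) > 0 \<and>
     (\<forall>i\<in>{1..<degree q}. deg_plus (Polynomial.coeff q 0) > deg_plus (Polynomial.coeff q i)) \<and>
     deg_minus (Polynomial.coeff q 0) < 0 \<and>
     (\<forall>i\<in>{1..<degree q}. deg_minus (Polynomial.coeff q 0) < deg_minus (Polynomial.coeff q i))"

definition expansive_mat :: "'a::comm_ring_1 fls mat \<Rightarrow> bool" where
  "expansive_mat M \<longleftrightarrow> expansive_poly (char_poly M)"

definition configs :: "nat \<Rightarrow> (int \<Rightarrow> 'a vec) set" where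
  "configs n = {c. \<forall>i. dim_vec (c i) = n}"

text \<open>The linear CA with associated matrix M = sum_j A_j X^(-j): A_j has entries
  the coefficients of X^(-j) in the entries of M;  F(c)_i = sum_j A_j c_(i+j).\<close>
definition lin_CA :: "nat \<Rightarrow> 'a::comm_ring_1 fls mat \<Rightarrow> (int \<Rightarrow> 'a vec) \<Rightarrow> (int \<Rightarrow> 'a vec)" where
  "lin_CA n M c = (\<lambda>i. vec n (\<lambda>a.
      \<Sum>j\<in>{j. \<exists>a'<n. \<exists>b<n. fls_nth (M $$ (a', b)) (- j) \<noteq> 0}.
        \<Sum>b<n. fls_nth (M $$ (a, b)) (- j) * (c (i + j) $ b)))"

definition cfg_dist :: "(int \<Rightarrow> 'a) \<Rightarrow> (int \<Rightarrow> 'a) \<Rightarrow> real" where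
  "cfg_dist c c' = (if c = c' then 0
     else 2 powr (- real (LEAST k. \<exists>j. nat \<bar>j\<bar> = k \<and> c j \<noteq> c' j)))"

definition pos_expansive :: "nat \<Rightarrow> ((int \<Rightarrow> 'a vec) \<Rightarrow> (int \<Rightarrow> 'a vec)) \<Rightarrow> bool" where
  "pos_expansive n F \<longleftrightarrow> (\<exists>\<epsilon>>0. \<forall>c\<in>configs n. \<forall>c'\<in>configs n. c \<noteq> c' \<longrightarrow>
      (\<exists>l::nat. cfg_dist ((F ^^ l) c) ((F ^^ l) c') \<ge> \<epsilon>))"

definition comp_like_mat :: "nat \<Rightarrow> (nat \<Rightarrow> 'a::comm_ring_1) \<Rightarrow> 'a mat" where
  "comp_like_mat n \<alpha> = mat n n (\<lambda>(i, j). if i < n - 1 then (if j = i + 1 then 1 else 0) else \<alpha> j)"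

end

theory Submission
  imports Defs
begin

text \<open>
  Let \<open>u k i\<close> be the first component of cell \<open>i\<close> of \<open>F\<^sup>k c\<close>. The first \<open>n - 1\<close> rows of
  \<open>A\<close> shift components, so the orbit of \<open>c\<close> is determined by \<open>u\<close>, and \<open>u\<close> solves the
  recurrence \<open>u (k + n) = (\<Sum>b<n. \<alpha> b * u (k + b))\<close>, in which multiplying by a Laurent
  polynomial is a convolution in the cell index. Positive expansiveness thus says that a
  solution vanishing on a fixed window \<open>\<bar>i\<bar> \<le> R\<close> at all times vanishes everywhere.

  If the top exponent \<open>m\<close> of \<open>\<alpha> 0\<close> exceeds all exponents of the other \<open>\<alpha> b\<close>, the
  recurrence at cell \<open>i + m\<close> determines \<open>u k i\<close> from cells strictly to the right of \<open>i\<close>,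
  at distance at most \<open>m - L\<close> where \<open>L\<close> is the bottom exponent of \<open>\<alpha> 0\<close>; so vanishing
  spreads leftwards from the window, and symmetrically rightwards. Conversely, if say the
  bottom exponent does not dominate, then in \<open>u (k + n) - (\<Sum>b<n. \<alpha> b * u (k + b)) = 0\<close> the
  term of lowest exponent and, among those, largest index has index \<open>j > 0\<close>; solving for
  it, well-founded recursion yields a nonzero solution supported in \<open>i \<ge> 0\<close>. Shifted far
  away, this solution agrees with \<open>0\<close> on any window forever.

  Finally \<open>det (t I - A) = t\<^sup>n - (\<Sum>i<n. \<alpha> i * t\<^sup>i)\<close> has coefficients with the same supports
  as \<open>t\<^sup>n + (\<Sum>i<n. \<alpha> i * t\<^sup>i)\<close>, expansiveness of a polynomial only depends on these
  supports, and transposition preserves the characteristic polynomial.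
\<close>

section \<open>The characteristic polynomial\<close>

lemma index_comp_like_mat:
  "r < n \<Longrightarrow> b < n \<Longrightarrow>
    comp_like_mat n \<alpha> $$ (r, b) = (if r < n - 1 then (if b = r + 1 then 1 else 0) else \<alpha> b)"
  by (simp add: comp_like_mat_def)

text \<open>The matrix \<open>t I - comp_like_mat n \<beta>\<close>, written out entrywise.\<close>
definition comp_like_char_mat :: "nat \<Rightarrow> 'a::comm_ring_1 \<Rightarrow> (nat \<Rightarrow> 'a) \<Rightarrow> 'a mat" where
  "comp_like_char_mat n t \<beta> = mat n n (\<lambda>(i, j).
     if i < n - 1 then (if j = i then t else if j = i + 1 then -1 else 0)
     else (if j = n - 1 then t - \<beta> j else - \<beta> j))"

lemma det_comp_like_char_mat:
  "det (comp_like_char_mat (Suc n) t \<beta>) = t ^ Suc n - (\<Sum>i<Suc n. \<beta> i * t ^ i)"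
proof (induction n arbitrary: \<beta>)
  case 0
  have "det (comp_like_char_mat 1 t \<beta>) =
      (\<Sum>i<1. comp_like_char_mat 1 t \<beta> $$ (i, 0) * cofactor (comp_like_char_mat 1 t \<beta>) i 0)"
    by (rule laplace_expansion_column[of _ 1]) (auto simp: comp_like_char_mat_def)
  also have "\<dots> = t - \<beta> 0"
    by (simp add: comp_like_char_mat_def cofactor_def mat_delete_def)
  finally show ?case by simp
next
  case (Suc n)
  define M where "M = comp_like_char_mat (Suc (Suc n)) t \<beta>"
  have M: "M \<in> carrier_mat (Suc (Suc n)) (Suc (Suc n))"
    by (simp add: M_def comp_like_char_mat_def)
  \<comment> \<open>The first column has nonzero entries only in rows \<open>0\<close> and \<open>n + 1\<close>.\<close>
  have "det M = (\<Sum>i<Suc (Suc n). M $$ (i, 0) * cofactor M i 0)"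
    by (rule laplace_expansion_column[OF M]) auto
  also have "\<dots> = (\<Sum>i\<in>{0, Suc n}. M $$ (i, 0) * cofactor M i 0)"
    by (rule sum.mono_neutral_right) (auto simp: M_def comp_like_char_mat_def)
  also have "\<dots> = t * cofactor M 0 0 - \<beta> 0 * cofactor M (Suc n) 0"
    by (simp add: M_def comp_like_char_mat_def)
  finally have det_M: "det M = t * cofactor M 0 0 - \<beta> 0 * cofactor M (Suc n) 0" .
  have minor_00: "mat_delete M 0 0 = comp_like_char_mat (Suc n) t (\<lambda>i. \<beta> (Suc i))"
    by (rule eq_matI) (auto simp: M_def comp_like_char_mat_def mat_delete_def)
  have minor_n0: "det (mat_delete M (Suc n) 0) = (-1) ^ Suc n"
  proof -
    have D: "mat_delete M (Suc n) 0 \<in> carrier_mat (Suc n) (Suc n)"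
      using mat_delete_carrier[OF M, of "Suc n" 0] by simp
    have "diag_mat (mat_delete M (Suc n) 0) = map (\<lambda>i. -1) [0..<Suc n]"
      unfolding diag_mat_def using D
      by (intro map_cong) (auto simp: M_def comp_like_char_mat_def mat_delete_def)
    moreover have "det (mat_delete M (Suc n) 0) = prod_list (diag_mat (mat_delete M (Suc n) 0))"
      by (rule det_lower_triangular[OF _ D])
        (auto simp: M_def comp_like_char_mat_def mat_delete_def)
    ultimately show ?thesis by (simp add: map_replicate_const)
  qed
  have "det M = t * det (comp_like_char_mat (Suc n) t (\<lambda>i. \<beta> (Suc i))) - \<beta> 0"
    using det_M minor_00 minor_n0 by (simp add: cofactor_def)
  also have "\<dots> = t ^ Suc (Suc n) - (\<Sum>i<Suc (Suc n). \<beta> i * t ^ i)"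
    unfolding Suc.IH sum.lessThan_Suc_shift[of _ "Suc n"]
    by (simp add: algebra_simps sum_distrib_left)
  finally show ?case by (simp add: M_def)
qed

lemma char_poly_comp_like_mat:
  assumes "0 < n"
  shows "char_poly (comp_like_mat n \<alpha>) =
    Polynomial.monom 1 n + (\<Sum>i<n. Polynomial.monom (- \<alpha> i) i)"
proof -
  have "char_poly_matrix (comp_like_mat n \<alpha>) = comp_like_char_mat n [:0, 1:] (\<lambda>i. [:\<alpha> i:])"
    by (rule eq_matI)
      (auto simp: char_poly_matrix_def comp_like_mat_def comp_like_char_mat_def one_pCons)
  then have "char_poly (comp_like_mat n \<alpha>) =
      det (comp_like_char_mat (Suc (n - 1)) [:0, 1:] (\<lambda>i. [:\<alpha> i:]))"
    using assms by (simp add: char_poly_def)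
  also have "\<dots> = [:0, 1:] ^ n - (\<Sum>i<n. [:\<alpha> i:] * [:0, 1:] ^ i)"
    unfolding det_comp_like_char_mat using assms by simp
  also have "\<dots> = Polynomial.monom 1 n + (\<Sum>i<n. Polynomial.monom (- \<alpha> i) i)"
    by (simp add: monom_altdef sum_negf)
  finally show ?thesis .
qed

section \<open>Expansive polynomials via dominant coefficients\<close>

lemma is_lpoly_support:
  assumes "is_lpoly f" "f \<noteq> 0"
  shows "finite {i. fls_nth f i \<noteq> 0}" "{i. fls_nth f i \<noteq> 0} \<noteq> {}"
  using assms fls_nonzero_nth by (auto simp: is_lpoly_def)

lemma deg_plus_eq_iff:
  assumes "is_lpoly f"
  shows "deg_plus f = ereal (of_int m) \<longleftrightarrow> fls_nth f m \<noteq> 0 \<and> (\<forall>e. fls_nth f e \<noteq> 0 \<longrightarrow> e \<le> m)"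
proof (cases "f = 0")
  case False
  then show ?thesis
    using is_lpoly_support[OF assms False] by (auto simp: deg_plus_def Max_eq_iff)
qed (simp add: deg_plus_def)

lemma deg_plus_less_iff:
  assumes "is_lpoly f"
  shows "deg_plus f < ereal (of_int m) \<longleftrightarrow> (\<forall>e. fls_nth f e \<noteq> 0 \<longrightarrow> e < m)"
proof (cases "f = 0")
  case False
  then show ?thesis
    using is_lpoly_support[OF assms False] by (auto simp: deg_plus_def Max_less_iff)
qed (simp add: deg_plus_def)

lemma deg_minus_eq_iff:
  assumes "is_lpoly f"
  shows "deg_minus f = ereal (of_int L) \<longleftrightarrow> fls_nth f L \<noteq> 0 \<and> (\<forall>e. fls_nth f e \<noteq> 0 \<longrightarrow> L \<le> e)"
proof (cases "f = 0")
  case False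
  then show ?thesis
    using is_lpoly_support[OF assms False] by (auto simp: deg_minus_def Min_eq_iff)
qed (simp add: deg_minus_def)

lemma deg_minus_greater_iff:
  assumes "is_lpoly f"
  shows "ereal (of_int L) < deg_minus f \<longleftrightarrow> (\<forall>e. fls_nth f e \<noteq> 0 \<longrightarrow> L < e)"
proof (cases "f = 0")
  case False
  then show ?thesis
    using is_lpoly_support[OF assms False] by (auto simp: deg_minus_def Min_gr_iff)
qed (simp add: deg_minus_def)

text \<open>The coefficient families below are arrays \<open>a b e\<close>: the coefficient of \<open>X\<^sup>e\<close> in the
  \<open>b\<close>-th coefficient of a polynomial over Laurent polynomials.\<close>

definition top_dominant :: "nat \<Rightarrow> (nat \<Rightarrow> int \<Rightarrow> 'a::zero) \<Rightarrow> int \<Rightarrow> bool" where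
  "top_dominant n a m \<longleftrightarrow>
     0 < m \<and> a 0 m \<noteq> 0 \<and> (\<forall>b<n. \<forall>e. a b e \<noteq> 0 \<longrightarrow> e \<le> m \<and> (b \<noteq> 0 \<longrightarrow> e < m))"

definition bottom_dominant :: "nat \<Rightarrow> (nat \<Rightarrow> int \<Rightarrow> 'a::zero) \<Rightarrow> int \<Rightarrow> bool" where
  "bottom_dominant n a L \<longleftrightarrow>
     L < 0 \<and> a 0 L \<noteq> 0 \<and> (\<forall>b<n. \<forall>e. a b e \<noteq> 0 \<longrightarrow> L \<le> e \<and> (b \<noteq> 0 \<longrightarrow> L < e))"

lemma top_dominant_uminus [simp]:
  fixes a :: "nat \<Rightarrow> int \<Rightarrow> 'a::group_add"
  shows "top_dominant n (\<lambda>b e. - a b e) m \<longleftrightarrow> top_dominant n a m"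
  by (simp add: top_dominant_def)

lemma bottom_dominant_uminus [simp]:
  fixes a :: "nat \<Rightarrow> int \<Rightarrow> 'a::group_add"
  shows "bottom_dominant n (\<lambda>b e. - a b e) L \<longleftrightarrow> bottom_dominant n a L"
  by (simp add: bottom_dominant_def)

lemma deg_plus_dominant_iff:
  assumes "0 < n" and lpoly: "\<forall>b<n. is_lpoly (c b)"
  shows "c 0 \<noteq> 0 \<and> 0 < deg_plus (c 0) \<and> (\<forall>b\<in>{1..<n}. deg_plus (c b) < deg_plus (c 0)) \<longleftrightarrow>
    (\<exists>m. top_dominant n (\<lambda>b. fls_nth (c b)) m)"
proof
  assume lhs: "c 0 \<noteq> 0 \<and> 0 < deg_plus (c 0) \<and> (\<forall>b\<in>{1..<n}. deg_plus (c b) < deg_plus (c 0))"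
  then obtain m where m: "deg_plus (c 0) = ereal (of_int m)" by (auto simp: deg_plus_def)
  have "top_dominant n (\<lambda>b. fls_nth (c b)) m"
    unfolding top_dominant_def
  proof (intro conjI allI impI)
    show "0 < m" using lhs m by simp
    show "fls_nth (c 0) m \<noteq> 0" using m deg_plus_eq_iff assms by blast
    fix b e assume "b < n" "fls_nth (c b) e \<noteq> 0"
    moreover have "b \<noteq> 0 \<Longrightarrow> deg_plus (c b) < ereal (of_int m)" using lhs m \<open>b < n\<close> by auto
    ultimately show "b \<noteq> 0 \<Longrightarrow> e < m" "e \<le> m"
      using m deg_plus_eq_iff deg_plus_less_iff lpoly assms(1) by (metis less_imp_le)+
  qed
  then show "\<exists>m. top_dominant n (\<lambda>b. fls_nth (c b)) m" ..
next
  assume "\<exists>m. top_dominant n (\<lambda>b. fls_nth (c b)) m"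
  then obtain m where m: "top_dominant n (\<lambda>b. fls_nth (c b)) m" ..
  then have deg: "deg_plus (c 0) = ereal (of_int m)"
    using assms by (auto simp: top_dominant_def deg_plus_eq_iff)
  have "deg_plus (c b) < deg_plus (c 0)" if "b \<in> {1..<n}" for b
    using m that lpoly unfolding deg by (auto simp: top_dominant_def deg_plus_less_iff)
  then show "c 0 \<noteq> 0 \<and> 0 < deg_plus (c 0) \<and> (\<forall>b\<in>{1..<n}. deg_plus (c b) < deg_plus (c 0))"
    using m deg by (auto simp: top_dominant_def)
qed

lemma deg_minus_dominant_iff:
  assumes "0 < n" and lpoly: "\<forall>b<n. is_lpoly (c b)"
  shows "c 0 \<noteq> 0 \<and> deg_minus (c 0) < 0 \<and> (\<forall>b\<in>{1..<n}. deg_minus (c 0) < deg_minus (c b)) \<longleftrightarrow>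
    (\<exists>L. bottom_dominant n (\<lambda>b. fls_nth (c b)) L)"
proof
  assume lhs: "c 0 \<noteq> 0 \<and> deg_minus (c 0) < 0 \<and> (\<forall>b\<in>{1..<n}. deg_minus (c 0) < deg_minus (c b))"
  then obtain L where L: "deg_minus (c 0) = ereal (of_int L)" by (auto simp: deg_minus_def)
  have "bottom_dominant n (\<lambda>b. fls_nth (c b)) L"
    unfolding bottom_dominant_def
  proof (intro conjI allI impI)
    show "L < 0" using lhs L by simp
    show "fls_nth (c 0) L \<noteq> 0" using L deg_minus_eq_iff assms by blast
    fix b e assume "b < n" "fls_nth (c b) e \<noteq> 0"
    moreover have "b \<noteq> 0 \<Longrightarrow> ereal (of_int L) < deg_minus (c b)" using lhs L \<open>b < n\<close> by auto
    ultimately show "b \<noteq> 0 \<Longrightarrow> L < e" "L \<le> e"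
      using L deg_minus_eq_iff deg_minus_greater_iff lpoly assms(1) by (metis less_imp_le)+
  qed
  then show "\<exists>L. bottom_dominant n (\<lambda>b. fls_nth (c b)) L" ..
next
  assume "\<exists>L. bottom_dominant n (\<lambda>b. fls_nth (c b)) L"
  then obtain L where L: "bottom_dominant n (\<lambda>b. fls_nth (c b)) L" ..
  then have deg: "deg_minus (c 0) = ereal (of_int L)"
    using assms by (auto simp: bottom_dominant_def deg_minus_eq_iff)
  have "deg_minus (c 0) < deg_minus (c b)" if "b \<in> {1..<n}" for b
    using L that lpoly unfolding deg by (auto simp: bottom_dominant_def deg_minus_greater_iff)
  then show "c 0 \<noteq> 0 \<and> deg_minus (c 0) < 0 \<and> (\<forall>b\<in>{1..<n}. deg_minus (c 0) < deg_minus (c b))"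
    using L deg by (auto simp: bottom_dominant_def)
qed

lemma expansive_poly_iff_dominant:
  fixes \<gamma> :: "nat \<Rightarrow> 'a::comm_ring_1 fls"
  assumes "0 < n" and lpoly: "\<forall>i<n. is_lpoly (\<gamma> i)"
  shows "expansive_poly (Polynomial.monom 1 n + (\<Sum>i<n. Polynomial.monom (\<gamma> i) i)) \<longleftrightarrow>
    (\<exists>m. top_dominant n (\<lambda>b. fls_nth (\<gamma> b)) m) \<and> (\<exists>L. bottom_dominant n (\<lambda>b. fls_nth (\<gamma> b)) L)"
proof -
  define q where "q = Polynomial.monom 1 n + (\<Sum>i<n. Polynomial.monom (\<gamma> i) i)"
  have coeff_q: "Polynomial.coeff q k = (if k = n then 1 else if k < n then \<gamma> k else 0)" for k
    by (simp add: q_def coeff_sum coeff_monom)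
  have degree_q: "degree q = n"
    by (rule antisym) (auto simp: coeff_q intro: degree_le le_degree)
  have "is_lpoly (Polynomial.coeff q k)" for k
    using lpoly finite_subset[of "{i. fls_nth (1::'a fls) i \<noteq> 0}" "{0}"]
    by (auto simp: coeff_q is_lpoly_def)
  moreover have "monic q" using degree_q by (simp add: coeff_q)
  moreover have "Polynomial.coeff q b = \<gamma> b" if "b < n" for b
    using that by (simp add: coeff_q)
  ultimately show ?thesis
    using deg_plus_dominant_iff[OF assms] deg_minus_dominant_iff[OF assms] \<open>0 < n\<close>
    unfolding q_def[symmetric] expansive_poly_def degree_q by auto
qed

lemma expansive_mat_transpose:
  "A \<in> carrier_mat n n \<Longrightarrow> expansive_mat (transpose_mat A) \<longleftrightarrow> expansive_mat A"
  by (simp add: expansive_mat_def char_poly_transpose_mat)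

lemma expansive_comp_like_mat_iff_dominant:
  fixes \<alpha> :: "nat \<Rightarrow> 'a::comm_ring_1 fls"
  assumes "0 < n" and lpoly: "\<forall>i<n. is_lpoly (\<alpha> i)"
  shows "expansive_mat (comp_like_mat n \<alpha>) \<longleftrightarrow>
    (\<exists>m. top_dominant n (\<lambda>b. fls_nth (\<alpha> b)) m) \<and> (\<exists>L. bottom_dominant n (\<lambda>b. fls_nth (\<alpha> b)) L)"
proof -
  have "(\<lambda>b. fls_nth (- \<alpha> b)) = (\<lambda>b e. - fls_nth (\<alpha> b) e)" by (simp add: fun_eq_iff)
  moreover have "\<forall>i<n. is_lpoly (- \<alpha> i)" using lpoly by (simp add: is_lpoly_def)
  ultimately show ?thesis
    unfolding expansive_mat_def char_poly_comp_like_mat[OF \<open>0 < n\<close>]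
    using expansive_poly_iff_dominant[OF \<open>0 < n\<close>, of "\<lambda>i. - \<alpha> i"] by simp
qed

section \<open>Linear recurrences with Laurent polynomial coefficients\<close>

text \<open>Doubly indexed sequences \<open>w k i\<close> (time \<open>k\<close>, cell \<open>i\<close>) with
  \<open>w\<^sub>k\<^sub>+\<^sub>n = \<Sum>\<^sub>b\<^sub><\<^sub>n a\<^sub>b w\<^sub>k\<^sub>+\<^sub>b\<close>, where multiplying by the Laurent polynomial \<open>a\<^sub>b\<close> is a
  convolution in the cell index; the sums run over a finite set \<open>E\<close> that is assumed to
  contain all exponents occurring in \<open>a\<close>.\<close>

definition solves_lrec ::
    "nat \<Rightarrow> (nat \<Rightarrow> int \<Rightarrow> 'a::comm_ring_1) \<Rightarrow> int set \<Rightarrow> (nat \<Rightarrow> int \<Rightarrow> 'a) \<Rightarrow> bool" where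
  "solves_lrec n a E w \<longleftrightarrow> (\<forall>k i. w (k + n) i = (\<Sum>b<n. \<Sum>e\<in>E. a b e * w (k + b) (i - e)))"

definition lrec_expansive :: "nat \<Rightarrow> (nat \<Rightarrow> int \<Rightarrow> 'a::comm_ring_1) \<Rightarrow> int set \<Rightarrow> bool" where
  "lrec_expansive n a E \<longleftrightarrow> (\<exists>R::nat. \<forall>w. solves_lrec n a E w \<longrightarrow>
     (\<forall>k i. \<bar>i\<bar> \<le> int R \<longrightarrow> w k i = 0) \<longrightarrow> (\<forall>k i. w k i = 0))"

definition mirror :: "('b \<Rightarrow> int \<Rightarrow> 'a) \<Rightarrow> 'b \<Rightarrow> int \<Rightarrow> 'a" where
  "mirror a b e = a b (- e)"

lemma mirror_mirror [simp]: "mirror (mirror a) = a"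
  by (simp add: mirror_def fun_eq_iff)

lemma top_dominant_mirror: "top_dominant n (mirror a) m \<longleftrightarrow> bottom_dominant n a (- m)"
  unfolding top_dominant_def bottom_dominant_def mirror_def
  by (metis minus_minus neg_0_less_iff_less neg_le_iff_le neg_less_iff_less)

lemma solves_lrec_mirror:
  assumes "solves_lrec n a E w"
  shows "solves_lrec n (mirror a) (uminus ` E) (mirror w)"
  unfolding solves_lrec_def
proof (intro allI)
  fix k i
  have "mirror w (k + n) i = (\<Sum>b<n. \<Sum>e\<in>E. a b e * w (k + b) (- i - e))"
    using assms by (simp add: solves_lrec_def mirror_def)
  also have "\<dots> = (\<Sum>b<n. \<Sum>e\<in>uminus ` E. mirror a b e * mirror w (k + b) (i - e))"
    by (simp add: sum.reindex inj_on_def mirror_def minus_diff_commute)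
  finally show "mirror w (k + n) i =
      (\<Sum>b<n. \<Sum>e\<in>uminus ` E. mirror a b e * mirror w (k + b) (i - e))" .
qed

lemma mirror_supp:
  assumes "\<And>b e. b < n \<Longrightarrow> a b e \<noteq> 0 \<Longrightarrow> e \<in> E"
  shows "b < n \<Longrightarrow> mirror a b e \<noteq> 0 \<Longrightarrow> e \<in> uminus ` E"
  using assms[of b "- e"] by (intro rev_image_eqI[of "- e"]) (auto simp: mirror_def)

lemma solves_lrec_diff:
  "solves_lrec n a E w \<Longrightarrow> solves_lrec n a E w' \<Longrightarrow> solves_lrec n a E (\<lambda>k i. w k i - w' k i)"
  by (simp add: solves_lrec_def sum_subtractf[symmetric] right_diff_distrib)

lemma solves_lrec_shift:
  "solves_lrec n a E w \<Longrightarrow> solves_lrec n a E (\<lambda>k i. w k (i - s))"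
  by (simp add: solves_lrec_def algebra_simps)

lemma sum_sum_eq_single:
  fixes f :: "nat \<Rightarrow> 'b \<Rightarrow> 'a::comm_monoid_add"
  assumes "finite E" "b0 < n" "e0 \<in> E"
    and "\<And>b e. b < n \<Longrightarrow> e \<in> E \<Longrightarrow> (b, e) \<noteq> (b0, e0) \<Longrightarrow> f b e = 0"
  shows "(\<Sum>b<n. \<Sum>e\<in>E. f b e) = f b0 e0"
proof -
  have "(\<Sum>b<n. \<Sum>e\<in>E. f b e) = (\<Sum>b<n. if b = b0 then f b0 e0 else 0)"
    using assms by (intro sum.cong refl) (auto intro: sum.neutral simp: sum.remove)
  also have "\<dots> = f b0 e0" using assms(2) by simp
  finally show ?thesis .
qed

lemma solves_lrec_step_left:
  fixes a :: "nat \<Rightarrow> int \<Rightarrow> 'a::field"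
  assumes "0 < n" "finite E" and supp: "\<And>b e. b < n \<Longrightarrow> a b e \<noteq> 0 \<Longrightarrow> e \<in> E"
    and top: "top_dominant n a m" and "L \<le> 0" and low: "\<And>b e. b < n \<Longrightarrow> a b e \<noteq> 0 \<Longrightarrow> L \<le> e"
    and rec: "solves_lrec n a E w"
    and zero: "\<And>k i'. i < i' \<Longrightarrow> i' \<le> i + (m - L) \<Longrightarrow> w k i' = 0"
  shows "w k i = 0"
proof -
  have m: "0 < m" "a 0 m \<noteq> 0" and high: "\<And>b e. b < n \<Longrightarrow> a b e \<noteq> 0 \<Longrightarrow> e \<le> m \<and> (b \<noteq> 0 \<longrightarrow> e < m)"
    using top by (auto simp: top_dominant_def)
  \<comment> \<open>In the recurrence at cell \<open>i + m\<close>, every term except the top one of \<open>a\<^sub>0\<close> reads the window.\<close>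
  have "w (k + n) (i + m) = (\<Sum>b<n. \<Sum>e\<in>E. a b e * w (k + b) (i + m - e))"
    using rec by (simp add: solves_lrec_def)
  also have "\<dots> = a 0 m * w (k + 0) (i + m - m)"
  proof (rule sum_sum_eq_single[OF \<open>finite E\<close> \<open>0 < n\<close>])
    show "m \<in> E" using supp \<open>0 < n\<close> m by blast
    fix b e assume "b < n" "(b, e) \<noteq> (0, m)"
    show "a b e * w (k + b) (i + m - e) = 0"
    proof (cases "a b e = 0")
      case False
      then have "e < m" "L \<le> e"
        using high[OF \<open>b < n\<close> False] low[OF \<open>b < n\<close> False] \<open>(b, e) \<noteq> (0, m)\<close> by auto
      then show ?thesis using zero[of "i + m - e"] by simp
    qed simp
  qed
  finally have "a 0 m * w k i = w (k + n) (i + m)" by simp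
  also have "\<dots> = 0" using zero[of "i + m"] m \<open>L \<le> 0\<close> by simp
  finally show ?thesis using m by simp
qed

lemma solves_lrec_eq_0_leftwards:
  fixes a :: "nat \<Rightarrow> int \<Rightarrow> 'a::field"
  assumes "0 < n" "finite E" "\<And>b e. b < n \<Longrightarrow> a b e \<noteq> 0 \<Longrightarrow> e \<in> E"
    and "top_dominant n a m" "L \<le> 0" "\<And>b e. b < n \<Longrightarrow> a b e \<noteq> 0 \<Longrightarrow> L \<le> e"
    and "solves_lrec n a E w"
    and zero: "\<And>k i. t < i \<Longrightarrow> i \<le> t + (m - L) \<Longrightarrow> w k i = 0"
    and "i \<le> t + (m - L)"
  shows "w k i = 0"
proof -
  have "w k i = 0" if "t - int d < i" "i \<le> t + (m - L)" for d k i
    using that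
  proof (induction d arbitrary: k i)
    case 0
    then show ?case using zero by simp
  next
    case (Suc d)
    show ?case
    proof (cases "i = t - int d")
      case True
      show ?thesis
        unfolding True by (rule solves_lrec_step_left[OF assms(1-7)]) (auto intro: Suc.IH)
    next
      case False
      then show ?thesis using Suc by simp
    qed
  qed
  moreover have "t - int (nat (t - i + 1)) < i" by simp
  ultimately show ?thesis using \<open>i \<le> t + (m - L)\<close> by blast
qed

lemma solves_lrec_eq_0_of_window:
  fixes a :: "nat \<Rightarrow> int \<Rightarrow> 'a::field"
  assumes "0 < n" "finite E" and supp: "\<And>b e. b < n \<Longrightarrow> a b e \<noteq> 0 \<Longrightarrow> e \<in> E"
    and top: "top_dominant n a m" and bot: "bottom_dominant n a L"
    and rec: "solves_lrec n a E w"
    and window: "\<And>k i. \<bar>i\<bar> \<le> m - L \<Longrightarrow> w k i = 0"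
  shows "w k i = 0"
proof -
  have "L < 0" and low: "\<And>b e. b < n \<Longrightarrow> a b e \<noteq> 0 \<Longrightarrow> L \<le> e"
    using bot by (auto simp: bottom_dominant_def)
  have "0 < m" and high: "\<And>b e. b < n \<Longrightarrow> a b e \<noteq> 0 \<Longrightarrow> e \<le> m"
    using top by (auto simp: top_dominant_def)
  define t0 where "t0 = - (m - L) - 1"
  have left: "w k i = 0" if "i < 0" for k i
    by (rule solves_lrec_eq_0_leftwards[OF assms(1-4) _ low rec, where t = t0])
      (use \<open>L < 0\<close> that window in \<open>auto simp: t0_def\<close>)
  have "mirror w k i = 0" if "i < 0" for k i
  proof (rule solves_lrec_eq_0_leftwards[OF \<open>0 < n\<close> _ _ _ _ _ solves_lrec_mirror[OF rec],
        where m = "- L" and L = "- m" and t = t0])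
    show "finite (uminus ` E)" using \<open>finite E\<close> by simp
    show "\<And>b e. b < n \<Longrightarrow> mirror a b e \<noteq> 0 \<Longrightarrow> e \<in> uminus ` E"
      by (rule mirror_supp[OF supp])
    show "top_dominant n (mirror a) (- L)" using bot by (simp add: top_dominant_mirror)
    show "\<And>b e. b < n \<Longrightarrow> mirror a b e \<noteq> 0 \<Longrightarrow> - m \<le> e"
      using high by (fastforce simp: mirror_def)
  qed (use \<open>0 < m\<close> that window in \<open>auto simp: t0_def mirror_def\<close>)
  then have "w k i = 0" if "0 < i" for k i
    using that by (metis mirror_def minus_minus neg_less_0_iff_less)
  then show ?thesis using left window[of 0] \<open>0 < m\<close> \<open>L < 0\<close>
    by (cases i "0::int" rule: linorder_cases) auto
qed

lemma obtain_pivot: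
  fixes a :: "nat \<Rightarrow> int \<Rightarrow> 'a::zero"
  assumes "finite E" and supp: "\<And>b e. b \<le> N \<Longrightarrow> a b e \<noteq> 0 \<Longrightarrow> e \<in> E"
    and "c \<le> N" "a c d \<noteq> 0"
  obtains j \<mu> where "j \<le> N" "a j \<mu> \<noteq> 0"
    "\<And>b e. b \<le> N \<Longrightarrow> a b e \<noteq> 0 \<Longrightarrow> \<mu> \<le> e"
    "\<And>b. b \<le> N \<Longrightarrow> a b \<mu> \<noteq> 0 \<Longrightarrow> b \<le> j"
proof -
  define \<mu> where "\<mu> = Min {e \<in> E. \<exists>b\<le>N. a b e \<noteq> 0}"
  define j where "j = Max {b. b \<le> N \<and> a b \<mu> \<noteq> 0}"
  have "\<mu> \<in> {e \<in> E. \<exists>b\<le>N. a b e \<noteq> 0}"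
    unfolding \<mu>_def using assms by (intro Min_in) auto
  then have "j \<in> {b. b \<le> N \<and> a b \<mu> \<noteq> 0}"
    unfolding j_def by (intro Max_in) (auto intro: finite_subset[of _ "{..N}"])
  moreover have "\<mu> \<le> e" if "b \<le> N" "a b e \<noteq> 0" for b e
    unfolding \<mu>_def using assms that by (intro Min_le) auto
  moreover have "b \<le> j" if "b \<le> N" "a b \<mu> \<noteq> 0" for b
    unfolding j_def using that by (intro Max_ge) (auto intro: finite_subset[of _ "{..N}"])
  ultimately show ?thesis using that by blast
qed

text \<open>Given a pivot, i.e.\ the term \<open>a\<^sub>j X\<^sup>\<mu>\<close> with lowest exponent and, among those, the
  largest index \<open>j > 0\<close>, the equation \<open>\<Sum>\<^sub>b\<^sub>\<le>\<^sub>N a\<^sub>b U\<^sub>k\<^sub>+\<^sub>b = 0\<close> at \<open>(k, i + \<mu>)\<close> can be solved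
  for \<open>U (k + j) i\<close>; all other terms involve a smaller cell index, or the same cell
  index and an earlier time.\<close>
function pivot_solution ::
    "(nat \<Rightarrow> int \<Rightarrow> 'a::field) \<Rightarrow> nat \<Rightarrow> int set \<Rightarrow> nat \<Rightarrow> int \<Rightarrow> nat \<Rightarrow> nat \<Rightarrow> 'a" where
  "pivot_solution a N E j \<mu> i k =
    (if k < j then (if i = 0 \<and> k = 0 then 1 else 0)
     else - (\<Sum>(b, e) \<in> {..N} \<times> E - {(j, \<mu>)}.
              if \<mu> \<le> e \<and> (j < b \<longrightarrow> \<mu> < e) \<and> e \<le> int i + \<mu>
              then a b e * pivot_solution a N E j \<mu> (nat (int i + \<mu> - e)) (k - j + b) else 0)
          / a j \<mu>)"
  by pat_completeness auto
termination
  by (relation "inv_image (less_than <*lex*> less_than) (\<lambda>(a, N, E, j, \<mu>, i, k). (i, k))") auto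

declare pivot_solution.simps [simp del]

lemma pivot_solution_pivot_eq:
  fixes a :: "nat \<Rightarrow> int \<Rightarrow> 'a::field"
  assumes supp: "\<And>b e. b \<le> N \<Longrightarrow> a b e \<noteq> 0 \<Longrightarrow> e \<in> E"
    and a_j: "a j \<mu> \<noteq> 0"
    and low: "\<And>b e. b \<le> N \<Longrightarrow> a b e \<noteq> 0 \<Longrightarrow> \<mu> \<le> e"
    and last: "\<And>b. b \<le> N \<Longrightarrow> a b \<mu> \<noteq> 0 \<Longrightarrow> b \<le> j"
    and "\<mu> \<le> i"
  defines "U \<equiv> \<lambda>k i. if i < 0 then 0 else pivot_solution a N E j \<mu> (nat i) k"
  shows "a j \<mu> * U (k + j) (i - \<mu>) = - (\<Sum>(b, e) \<in> {..N} \<times> E - {(j, \<mu>)}. a b e * U (k + b) (i - e))"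
proof -
  define S where "S = {..N} \<times> E - {(j, \<mu>)}"
  have "(\<Sum>(b, e) \<in> S. a b e * U (k + b) (i - e)) =
    (\<Sum>(b, e) \<in> S.
      if \<mu> \<le> e \<and> (j < b \<longrightarrow> \<mu> < e) \<and> e \<le> int (nat (i - \<mu>)) + \<mu>
      then a b e * pivot_solution a N E j \<mu> (nat (int (nat (i - \<mu>)) + \<mu> - e)) (k + j - j + b)
      else 0)"
  proof (intro sum.cong refl, clarify)
    fix b e assume "(b, e) \<in> S"
    then have "b \<le> N" by (simp add: S_def)
    show "a b e * U (k + b) (i - e) =
      (if \<mu> \<le> e \<and> (j < b \<longrightarrow> \<mu> < e) \<and> e \<le> int (nat (i - \<mu>)) + \<mu>
       then a b e * pivot_solution a N E j \<mu> (nat (int (nat (i - \<mu>)) + \<mu> - e)) (k + j - j + b)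
       else 0)"
    proof (cases "a b e = 0")
      case False
      then have "\<mu> \<le> e" using low \<open>b \<le> N\<close> by blast
      moreover have "e \<noteq> \<mu>" if "j < b"
        using last[OF \<open>b \<le> N\<close>] False that by force
      ultimately show ?thesis using \<open>\<mu> \<le> i\<close> by (auto simp: U_def)
    qed simp
  qed
  then show ?thesis
    using \<open>\<mu> \<le> i\<close> a_j unfolding U_def S_def
    by (simp add: pivot_solution.simps[of a N E j \<mu> "nat (i - \<mu>)" "k + j"])
qed

lemma pivot_solution_solves:
  fixes a :: "nat \<Rightarrow> int \<Rightarrow> 'a::field"
  assumes "finite E" and supp: "\<And>b e. b \<le> N \<Longrightarrow> a b e \<noteq> 0 \<Longrightarrow> e \<in> E"
    and "j \<le> N" and a_j: "a j \<mu> \<noteq> 0"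
    and low: "\<And>b e. b \<le> N \<Longrightarrow> a b e \<noteq> 0 \<Longrightarrow> \<mu> \<le> e"
    and last: "\<And>b. b \<le> N \<Longrightarrow> a b \<mu> \<noteq> 0 \<Longrightarrow> b \<le> j"
  defines "U \<equiv> \<lambda>k i. if i < 0 then 0 else pivot_solution a N E j \<mu> (nat i) k"
  shows "(\<Sum>b\<le>N. \<Sum>e\<in>E. a b e * U (k + b) (i - e)) = 0"
proof (cases "\<mu> \<le> i")
  case True
  have "(\<Sum>b\<le>N. \<Sum>e\<in>E. a b e * U (k + b) (i - e)) =
      (\<Sum>(b, e) \<in> {..N} \<times> E. a b e * U (k + b) (i - e))"
    by (simp add: sum.cartesian_product)
  also have "\<dots> = a j \<mu> * U (k + j) (i - \<mu>) +
      (\<Sum>(b, e) \<in> {..N} \<times> E - {(j, \<mu>)}. a b e * U (k + b) (i - e))"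
    using supp[OF \<open>j \<le> N\<close> a_j] \<open>j \<le> N\<close> \<open>finite E\<close> by (subst sum.remove) auto
  also have "a j \<mu> * U (k + j) (i - \<mu>) =
      - (\<Sum>(b, e) \<in> {..N} \<times> E - {(j, \<mu>)}. a b e * U (k + b) (i - e))"
    unfolding U_def by (rule pivot_solution_pivot_eq) (use supp a_j low last True in auto)
  finally show ?thesis by simp
next
  case False
  have "a b e * U (k + b) (i - e) = 0" if "b \<le> N" for b e
  proof (cases "a b e = 0")
    case False
    then have "i - e < 0" using low[OF that False] \<open>\<not> \<mu> \<le> i\<close> by simp
    then show ?thesis by (simp add: U_def)
  qed simp
  then show ?thesis by (simp add: sum.neutral)
qed

lemma solves_lrec_if_homogeneous:
  fixes a :: "nat \<Rightarrow> int \<Rightarrow> 'a::comm_ring_1"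
  assumes "finite E" "0 \<in> E"
    and homogeneous: "\<And>k i. (\<Sum>b\<le>n. \<Sum>e\<in>E.
      (if b < n then a b e else if e = 0 then -1 else 0) * U (k + b) (i - e)) = 0"
  shows "solves_lrec n a E U"
  unfolding solves_lrec_def
proof (intro allI)
  fix k i
  have "(\<Sum>e\<in>E. (if e = 0 then -1 else 0) * U (k + n) (i - e)) =
      (\<Sum>e\<in>E. if e = 0 then - U (k + n) (i - e) else 0)"
    by (intro sum.cong refl) simp
  also have "\<dots> = - U (k + n) i" using assms(1,2) by simp
  finally show "U (k + n) i = (\<Sum>b<n. \<Sum>e\<in>E. a b e * U (k + b) (i - e))"
    using homogeneous[of k i] by (simp add: lessThan_Suc_atMost[symmetric])
qed

lemma solves_lrec_exists_right_supported:
  fixes a :: "nat \<Rightarrow> int \<Rightarrow> 'a::field"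
  assumes "0 < n" "finite E" "0 \<in> E" and supp: "\<And>b e. b < n \<Longrightarrow> a b e \<noteq> 0 \<Longrightarrow> e \<in> E"
    and not_bottom: "\<nexists>L. bottom_dominant n a L"
  shows "\<exists>U. U 0 0 \<noteq> 0 \<and> (\<forall>k i. i < 0 \<longrightarrow> U k i = 0) \<and> solves_lrec n a E U"
proof -
  \<comment> \<open>Moving \<open>U\<^sub>k\<^sub>+\<^sub>n\<close> to the right, the recurrence reads \<open>\<Sum>\<^sub>b\<^sub>\<le>\<^sub>n a'\<^sub>b U\<^sub>k\<^sub>+\<^sub>b = 0\<close>.\<close>
  define a' where "a' b e = (if b < n then a b e else if e = 0 then -1 else 0)" for b e
  have supp': "e \<in> E" if "b \<le> n" "a' b e \<noteq> 0" for b e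
    using that supp \<open>0 \<in> E\<close> by (auto simp: a'_def split: if_splits)
  obtain j \<mu> where "j \<le> n" and a_j: "a' j \<mu> \<noteq> 0"
    and low: "\<And>b e. b \<le> n \<Longrightarrow> a' b e \<noteq> 0 \<Longrightarrow> \<mu> \<le> e"
    and last: "\<And>b. b \<le> n \<Longrightarrow> a' b \<mu> \<noteq> 0 \<Longrightarrow> b \<le> j"
    by (rule obtain_pivot[where a = a' and N = n and c = n and d = 0])
      (use \<open>finite E\<close> supp' in \<open>auto simp: a'_def\<close>)
  have "0 < j"
  proof (rule ccontr)
    assume "\<not> 0 < j"
    then have "j = 0" by simp
    have "\<mu> < 0"
      using low[of n 0] last[of n] \<open>0 < n\<close> \<open>j = 0\<close> by (force simp: a'_def le_less)
    moreover have "a 0 \<mu> \<noteq> 0" using a_j \<open>j = 0\<close> \<open>0 < n\<close> by (simp add: a'_def)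
    moreover have "\<mu> \<le> e \<and> (b \<noteq> 0 \<longrightarrow> \<mu> < e)" if "b < n" "a b e \<noteq> 0" for b e
      using low[of b e] last[of b] that \<open>j = 0\<close> by (force simp: a'_def le_less)
    ultimately have "bottom_dominant n a \<mu>" by (simp add: bottom_dominant_def)
    with not_bottom show False by blast
  qed
  define U where "U k i = (if i < 0 then 0 else pivot_solution a' n E j \<mu> (nat i) k)" for k i
  have eq: "(\<Sum>b\<le>n. \<Sum>e\<in>E. a' b e * U (k + b) (i - e)) = 0" for k i
    unfolding U_def
    by (rule pivot_solution_solves) (use \<open>finite E\<close> supp' \<open>j \<le> n\<close> a_j low last in auto)
  have "solves_lrec n a E U"
    using \<open>finite E\<close> \<open>0 \<in> E\<close> eq unfolding a'_def by (rule solves_lrec_if_homogeneous)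
  moreover have "U 0 0 = 1" using \<open>0 < j\<close> by (simp add: U_def pivot_solution.simps)
  moreover have "\<forall>k i. i < 0 \<longrightarrow> U k i = 0" by (simp add: U_def)
  ultimately show ?thesis by (metis one_neq_zero)
qed

lemma solves_lrec_exists_left_supported:
  fixes a :: "nat \<Rightarrow> int \<Rightarrow> 'a::field"
  assumes "0 < n" "finite E" "0 \<in> E" and supp: "\<And>b e. b < n \<Longrightarrow> a b e \<noteq> 0 \<Longrightarrow> e \<in> E"
    and not_top: "\<nexists>m. top_dominant n a m"
  shows "\<exists>U. U 0 0 \<noteq> 0 \<and> (\<forall>k i. 0 < i \<longrightarrow> U k i = 0) \<and> solves_lrec n a E U"
proof -
  have "\<nexists>L. bottom_dominant n (mirror a) L"
  proof
    assume "\<exists>L. bottom_dominant n (mirror a) L"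
    then obtain L where "bottom_dominant n (mirror a) L" ..
    then have "top_dominant n a (- L)"
      using top_dominant_mirror[of n "mirror a" "- L"] by simp
    with not_top show False by blast
  qed
  moreover have "finite (uminus ` E)" "0 \<in> uminus ` E" using assms(2,3) by auto
  moreover have "e \<in> uminus ` E" if "b < n" "mirror a b e \<noteq> 0" for b e
    using mirror_supp[of n a E b e] supp that by blast
  ultimately obtain U where U: "U 0 0 \<noteq> 0" "\<forall>k i. i < 0 \<longrightarrow> U k i = 0"
    and "solves_lrec n (mirror a) (uminus ` E) U"
    using solves_lrec_exists_right_supported[of n "uminus ` E" "mirror a"] \<open>0 < n\<close> by blast
  then have "solves_lrec n a E (mirror U)"
    using solves_lrec_mirror[of n "mirror a" "uminus ` E" U] by (simp add: image_image)
  with U show ?thesis by (intro exI[of _ "mirror U"]) (auto simp: mirror_def)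
qed

lemma solves_lrec_obtain_half_supported:
  fixes a :: "nat \<Rightarrow> int \<Rightarrow> 'a::field"
  assumes "0 < n" "finite E" "0 \<in> E" and supp: "\<And>b e. b < n \<Longrightarrow> a b e \<noteq> 0 \<Longrightarrow> e \<in> E"
    and not_dominant: "\<not> ((\<exists>m. top_dominant n a m) \<and> (\<exists>L. bottom_dominant n a L))"
  obtains U and s :: int where "s = 1 \<or> s = -1" "U 0 0 \<noteq> 0"
    "\<And>k i. s * i < 0 \<Longrightarrow> U k i = 0" "solves_lrec n a E U"
proof (cases "\<exists>L. bottom_dominant n a L")
  case True
  with not_dominant have "\<nexists>m. top_dominant n a m" by blast
  then obtain U where "U 0 0 \<noteq> 0" "\<forall>k i. 0 < i \<longrightarrow> U k i = 0" "solves_lrec n a E U"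
    using solves_lrec_exists_left_supported[of n E a] assms supp by blast
  then show ?thesis by (intro that[of "-1" U]) auto
next
  case False
  then obtain U where "U 0 0 \<noteq> 0" "\<forall>k i. i < 0 \<longrightarrow> U k i = 0" "solves_lrec n a E U"
    using solves_lrec_exists_right_supported[of n E a] assms supp by blast
  then show ?thesis by (intro that[of 1 U]) auto
qed

lemma dominant_if_lrec_expansive:
  fixes a :: "nat \<Rightarrow> int \<Rightarrow> 'a::field"
  assumes "0 < n" "finite E" "0 \<in> E" and supp: "\<And>b e. b < n \<Longrightarrow> a b e \<noteq> 0 \<Longrightarrow> e \<in> E"
    and "lrec_expansive n a E"
  shows "(\<exists>m. top_dominant n a m) \<and> (\<exists>L. bottom_dominant n a L)"
proof (rule ccontr)
  assume not_dominant: "\<not> ?thesis"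
  obtain U and s :: int where s: "s = 1 \<or> s = -1" and "U 0 0 \<noteq> 0"
    and U_zero: "\<And>k i. s * i < 0 \<Longrightarrow> U k i = 0" and "solves_lrec n a E U"
    by (rule solves_lrec_obtain_half_supported[of n E a]) (use assms(1-3) supp not_dominant in auto)
  obtain R :: nat where R: "\<And>w. solves_lrec n a E w \<Longrightarrow>
      (\<forall>k i. \<bar>i\<bar> \<le> int R \<longrightarrow> w k i = 0) \<Longrightarrow> (\<forall>k i. w k i = 0)"
    using \<open>lrec_expansive n a E\<close> unfolding lrec_expansive_def by blast
  define w where "w k i = U k (i - s * (int R + 1))" for k i
  have "solves_lrec n a E w"
    unfolding w_def by (rule solves_lrec_shift) fact
  moreover have "w k i = 0" if "\<bar>i\<bar> \<le> int R" for k i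
    unfolding w_def using s that by (intro U_zero) (auto simp: algebra_simps)
  ultimately have "w 0 (s * (int R + 1)) = 0" using R by blast
  with \<open>U 0 0 \<noteq> 0\<close> show False by (simp add: w_def)
qed

lemma lrec_expansive_if_dominant:
  fixes a :: "nat \<Rightarrow> int \<Rightarrow> 'a::field"
  assumes "0 < n" "finite E" and supp: "\<And>b e. b < n \<Longrightarrow> a b e \<noteq> 0 \<Longrightarrow> e \<in> E"
    and top: "top_dominant n a m" and bot: "bottom_dominant n a L"
  shows "lrec_expansive n a E"
proof -
  have "int (nat (m - L)) = m - L" using top bot by (simp add: top_dominant_def bottom_dominant_def)
  then have "w k i = 0"
    if "solves_lrec n a E w" "\<forall>k i. \<bar>i\<bar> \<le> int (nat (m - L)) \<longrightarrow> w k i = 0" for w k i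
    using solves_lrec_eq_0_of_window[of n E a m L w] assms supp that by simp
  then show ?thesis unfolding lrec_expansive_def by blast
qed

lemma lrec_expansive_iff_dominant:
  fixes a :: "nat \<Rightarrow> int \<Rightarrow> 'a::field"
  assumes "0 < n" "finite E" "0 \<in> E" and supp: "\<And>b e. b < n \<Longrightarrow> a b e \<noteq> 0 \<Longrightarrow> e \<in> E"
  shows "lrec_expansive n a E \<longleftrightarrow> (\<exists>m. top_dominant n a m) \<and> (\<exists>L. bottom_dominant n a L)"
proof
  show "(\<exists>m. top_dominant n a m) \<and> (\<exists>L. bottom_dominant n a L)" if "lrec_expansive n a E"
    by (rule dominant_if_lrec_expansive) (use assms supp that in auto)
next
  assume "(\<exists>m. top_dominant n a m) \<and> (\<exists>L. bottom_dominant n a L)"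
  then obtain m L where "top_dominant n a m" "bottom_dominant n a L" by blast
  then show "lrec_expansive n a E"
    by (intro lrec_expansive_if_dominant) (use assms supp in auto)
qed

section \<open>The cellular automaton\<close>

lemma cfg_dist_less_imp_eq:
  assumes "cfg_dist d d' < 2 powr - real R" "\<bar>j\<bar> \<le> int R"
  shows "d j = d' j"
proof (rule ccontr)
  assume "d j \<noteq> d' j"
  then have "d \<noteq> d'" by auto
  have "(LEAST k. \<exists>j. nat \<bar>j\<bar> = k \<and> d j \<noteq> d' j) \<le> nat \<bar>j\<bar>"
    using \<open>d j \<noteq> d' j\<close> by (intro Least_le) blast
  also have "\<dots> \<le> R" using assms(2) by simp
  finally have "2 powr - real R \<le> cfg_dist d d'"
    using \<open>d \<noteq> d'\<close> by (simp add: cfg_dist_def)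
  with assms(1) show False by simp
qed

lemma cfg_dist_le_if_eq_on:
  assumes "\<And>j. \<bar>j\<bar> \<le> int R \<Longrightarrow> d j = d' j"
  shows "cfg_dist d d' \<le> 2 powr - real (Suc R)"
proof (cases "d = d'")
  case False
  define k where "k = (LEAST k. \<exists>j. nat \<bar>j\<bar> = k \<and> d j \<noteq> d' j)"
  obtain j0 where "d j0 \<noteq> d' j0" using False by blast
  then have "\<exists>j. nat \<bar>j\<bar> = k \<and> d j \<noteq> d' j"
    unfolding k_def using LeastI[of "\<lambda>k. \<exists>j. nat \<bar>j\<bar> = k \<and> d j \<noteq> d' j" "nat \<bar>j0\<bar>"] by blast
  then have "Suc R \<le> k" using assms by force
  then show ?thesis using False by (simp add: cfg_dist_def k_def[symmetric])
qed (simp add: cfg_dist_def)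

lemma ex_two_powr_neg_less:
  assumes "0 < (\<epsilon>::real)"
  obtains R :: nat where "2 powr - real R < \<epsilon>"
proof -
  obtain R where R: "inverse 2 ^ R < \<epsilon>"
    using real_arch_pow_inv[OF assms, of "inverse 2"] by auto
  have "(2::real) powr - real R = inverse 2 ^ R"
    by (simp only: powr_minus powr_realpow power_inverse zero_less_numeral)
  then show ?thesis by (intro that[of R]) (simp only: R)
qed

locale comp_like_CA =
  fixes n :: nat and \<alpha> :: "nat \<Rightarrow> 'a::comm_ring_1 fls"
  assumes n_gt_1: "1 < n" and lpoly: "\<forall>i<n. is_lpoly (\<alpha> i)"
begin

abbreviation F :: "(int \<Rightarrow> 'a vec) \<Rightarrow> int \<Rightarrow> 'a vec" where
  "F \<equiv> lin_CA n (comp_like_mat n \<alpha>)"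

definition exponents :: "int set" where
  "exponents = {e. \<exists>r<n. \<exists>b<n. fls_nth (comp_like_mat n \<alpha> $$ (r, b)) e \<noteq> 0}"

lemma finite_exponents: "finite exponents"
proof (rule finite_subset)
  show "exponents \<subseteq> {0} \<union> (\<Union>b<n. {e. fls_nth (\<alpha> b) e \<noteq> 0})"
    by (auto simp: exponents_def index_comp_like_mat split: if_splits)
  show "finite ({0} \<union> (\<Union>b<n. {e. fls_nth (\<alpha> b) e \<noteq> 0}))"
    using lpoly by (auto simp: is_lpoly_def)
qed

lemma zero_in_exponents: "0 \<in> exponents"
proof -
  have "fls_nth (comp_like_mat n \<alpha> $$ (0, 1)) 0 \<noteq> 0" "0 < n"
    using n_gt_1 by (simp_all add: index_comp_like_mat)
  then show ?thesis unfolding exponents_def using n_gt_1 by blast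
qed

lemma exponents_supp:
  assumes "b < n" "fls_nth (\<alpha> b) e \<noteq> 0"
  shows "e \<in> exponents"
proof -
  have "fls_nth (comp_like_mat n \<alpha> $$ (n - 1, b)) e \<noteq> 0" "n - 1 < n"
    using assms n_gt_1 by (simp_all add: index_comp_like_mat)
  then show ?thesis unfolding exponents_def using assms(1) by blast
qed

lemma lin_CA_nth:
  assumes "r < n"
  shows "F c i $ r = (if r < n - 1 then c i $ (r + 1)
    else (\<Sum>b<n. \<Sum>e\<in>exponents. fls_nth (\<alpha> b) e * c (i - e) $ b))"
proof -
  have "{j. \<exists>r<n. \<exists>b<n. fls_nth (comp_like_mat n \<alpha> $$ (r, b)) (- j) \<noteq> 0} = uminus ` exponents"
    by (force simp: exponents_def image_iff)
  then have F: "F c i $ r =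
      (\<Sum>e\<in>exponents. \<Sum>b<n. fls_nth (comp_like_mat n \<alpha> $$ (r, b)) e * c (i - e) $ b)"
    using assms by (simp add: lin_CA_def sum.reindex inj_on_def)
  show ?thesis
  proof (cases "r < n - 1")
    case True
    have "F c i $ r = (\<Sum>e\<in>exponents. if e = 0 then c i $ (r + 1) else 0)"
      unfolding F using assms True
      by (intro sum.cong refl)
        (simp add: index_comp_like_mat if_distrib[of "\<lambda>x. fls_nth x _"]
          if_distrib[of "\<lambda>x. x * _"] cong: if_cong)
    then show ?thesis using True finite_exponents zero_in_exponents by simp
  next
    case False
    then have "F c i $ r = (\<Sum>e\<in>exponents. \<Sum>b<n. fls_nth (\<alpha> b) e * c (i - e) $ b)"
      unfolding F using assms by (simp add: index_comp_like_mat)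
    then show ?thesis using False by (simp add: sum.swap[of _ exponents])
  qed
qed

definition orbit_head :: "(int \<Rightarrow> 'a vec) \<Rightarrow> nat \<Rightarrow> int \<Rightarrow> 'a" where
  "orbit_head c k i = (F ^^ k) c i $ 0"

lemma iterate_nth: "r < n \<Longrightarrow> (F ^^ k) c i $ r = orbit_head c (k + r) i"
proof (induction r arbitrary: k)
  case 0
  then show ?case by (simp add: orbit_head_def)
next
  case (Suc r)
  have "(F ^^ k) c i $ Suc r = F ((F ^^ k) c) i $ r"
    using Suc.prems lin_CA_nth[of r "(F ^^ k) c" i] by simp
  also have "\<dots> = orbit_head c (Suc k + r) i"
    using Suc.IH[of "Suc k"] Suc.prems by simp
  finally show ?case by simp
qed

lemma solves_lrec_orbit_head: "solves_lrec n (\<lambda>b. fls_nth (\<alpha> b)) exponents (orbit_head c)"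
  unfolding solves_lrec_def
proof (intro allI)
  fix k i
  have "orbit_head c (k + n) i = (F ^^ Suc k) c i $ (n - 1)"
    using iterate_nth[of "n - 1" "Suc k"] n_gt_1 by simp
  also have "\<dots> = (\<Sum>b<n. \<Sum>e\<in>exponents. fls_nth (\<alpha> b) e * (F ^^ k) c (i - e) $ b)"
    using n_gt_1 by (simp add: lin_CA_nth)
  also have "\<dots> = (\<Sum>b<n. \<Sum>e\<in>exponents. fls_nth (\<alpha> b) e * orbit_head c (k + b) (i - e))"
    by (simp add: iterate_nth)
  finally show "orbit_head c (k + n) i =
      (\<Sum>b<n. \<Sum>e\<in>exponents. fls_nth (\<alpha> b) e * orbit_head c (k + b) (i - e))" .
qed

lemma configs_eqI:
  assumes "c \<in> configs n" "c' \<in> configs n" "\<And>k i. k < n \<Longrightarrow> orbit_head c k i = orbit_head c' k i"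
  shows "c = c'"
proof
  fix i
  show "c i = c' i"
    using assms iterate_nth[of _ 0 c i] iterate_nth[of _ 0 c' i]
    by (intro eq_vecI) (auto simp: configs_def)
qed

definition lrec_state :: "(nat \<Rightarrow> int \<Rightarrow> 'a) \<Rightarrow> nat \<Rightarrow> int \<Rightarrow> 'a vec" where
  "lrec_state w l = (\<lambda>i. vec n (\<lambda>r. w (l + r) i))"

lemma lrec_state_nth [simp]: "r < n \<Longrightarrow> lrec_state w l i $ r = w (l + r) i"
  by (simp add: lrec_state_def)

lemma lrec_state_configs: "lrec_state w l \<in> configs n"
  by (simp add: lrec_state_def configs_def)

lemma iterate_lrec_state:
  assumes "solves_lrec n (\<lambda>b. fls_nth (\<alpha> b)) exponents w"
  shows "(F ^^ l) (lrec_state w 0) = lrec_state w l"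
proof (induction l)
  case (Suc l)
  have "F (lrec_state w l) i $ r = lrec_state w (Suc l) i $ r" if "r < n" for i r
  proof (cases "r < n - 1")
    case False
    then have "r = n - 1" using that by simp
    then show ?thesis using assms that n_gt_1 by (simp add: lin_CA_nth solves_lrec_def)
  qed (use that in \<open>simp add: lin_CA_nth\<close>)
  then have "F (lrec_state w l) = lrec_state w (Suc l)"
    by (intro ext eq_vecI) (auto simp: lin_CA_def lrec_state_def)
  with Suc show ?case by simp
qed simp

lemma lrec_state_0_inj:
  assumes "solves_lrec n (\<lambda>b. fls_nth (\<alpha> b)) exponents w"
    and "solves_lrec n (\<lambda>b. fls_nth (\<alpha> b)) exponents w'"
    and "lrec_state w 0 = lrec_state w' 0"
  shows "w = w'"
proof (intro ext)
  fix k i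
  have "lrec_state w k = lrec_state w' k"
    using assms iterate_lrec_state by metis
  then have "lrec_state w k i $ 0 = lrec_state w' k i $ 0" by simp
  then show "w k i = w' k i" using n_gt_1 by simp
qed

lemma lrec_expansive_if_pos_expansive:
  assumes "pos_expansive n F"
  shows "lrec_expansive n (\<lambda>b. fls_nth (\<alpha> b)) exponents"
proof -
  obtain \<epsilon> :: real where "0 < \<epsilon>" and sep: "\<And>c c'. c \<in> configs n \<Longrightarrow> c' \<in> configs n \<Longrightarrow>
      c \<noteq> c' \<Longrightarrow> \<exists>l. \<epsilon> \<le> cfg_dist ((F ^^ l) c) ((F ^^ l) c')"
    using assms unfolding pos_expansive_def by blast
  obtain R :: nat where R: "2 powr - real R < \<epsilon>"
    using ex_two_powr_neg_less[OF \<open>0 < \<epsilon>\<close>] by blast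
  let ?zero = "\<lambda>(k::nat) (i::int). 0::'a"
  have rec_zero: "solves_lrec n (\<lambda>b. fls_nth (\<alpha> b)) exponents ?zero"
    by (simp add: solves_lrec_def)
  have "w = ?zero" if rec: "solves_lrec n (\<lambda>b. fls_nth (\<alpha> b)) exponents w"
    and window: "\<forall>k i. \<bar>i\<bar> \<le> int R \<longrightarrow> w k i = 0" for w
  proof (rule ccontr)
    assume "w \<noteq> ?zero"
    then have "lrec_state w 0 \<noteq> lrec_state ?zero 0"
      using lrec_state_0_inj[OF rec rec_zero] by blast
    then obtain l where "\<epsilon> \<le> cfg_dist (lrec_state w l) (lrec_state ?zero l)"
      using sep[OF lrec_state_configs[of w 0] lrec_state_configs[of ?zero 0]]
      unfolding iterate_lrec_state[OF rec] iterate_lrec_state[OF rec_zero] by blast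
    moreover have "cfg_dist (lrec_state w l) (lrec_state ?zero l) \<le> 2 powr - real (Suc R)"
      using window by (intro cfg_dist_le_if_eq_on) (simp add: lrec_state_def)
    moreover have "(2::real) powr - real (Suc R) \<le> 2 powr - real R"
      by (intro powr_mono) auto
    ultimately show False using R by simp
  qed
  then show ?thesis unfolding lrec_expansive_def by (intro exI[of _ R]) auto
qed

lemma pos_expansive_if_lrec_expansive:
  assumes "lrec_expansive n (\<lambda>b. fls_nth (\<alpha> b)) exponents"
  shows "pos_expansive n F"
proof -
  obtain R :: nat where R: "\<And>w. solves_lrec n (\<lambda>b. fls_nth (\<alpha> b)) exponents w \<Longrightarrow>
      (\<forall>k i. \<bar>i\<bar> \<le> int R \<longrightarrow> w k i = 0) \<Longrightarrow> (\<forall>k i. w k i = 0)"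
    using assms unfolding lrec_expansive_def by blast
  have "\<exists>l. 2 powr - real R \<le> cfg_dist ((F ^^ l) c) ((F ^^ l) c')"
    if "c \<in> configs n" "c' \<in> configs n" "c \<noteq> c'" for c c'
  proof (rule ccontr)
    assume "\<not> ?thesis"
    then have close: "cfg_dist ((F ^^ k) c) ((F ^^ k) c') < 2 powr - real R" for k
      by (simp add: not_le)
    define w where "w k i = orbit_head c k i - orbit_head c' k i" for k i
    have "solves_lrec n (\<lambda>b. fls_nth (\<alpha> b)) exponents w"
      unfolding w_def by (intro solves_lrec_diff solves_lrec_orbit_head)
    moreover have "\<forall>k i. \<bar>i\<bar> \<le> int R \<longrightarrow> w k i = 0"
      using cfg_dist_less_imp_eq[OF close] by (simp add: w_def orbit_head_def)
    ultimately have "\<forall>k i. w k i = 0" by (rule R)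
    then have "orbit_head c k i = orbit_head c' k i" for k i by (simp add: w_def)
    with that show False using configs_eqI by blast
  qed
  then show ?thesis
    unfolding pos_expansive_def by (intro exI[of _ "2 powr - real R"]) auto
qed

lemma pos_expansive_iff_lrec_expansive:
  "pos_expansive n F \<longleftrightarrow> lrec_expansive n (\<lambda>b. fls_nth (\<alpha> b)) exponents"
  using lrec_expansive_if_pos_expansive pos_expansive_if_lrec_expansive by blast

end

theorem lemma10:
  fixes \<alpha> :: "nat \<Rightarrow> 'p::prime_card mod_ring fls" and n :: nat
  assumes "n > 1"
    and "\<forall>i<n. is_lpoly (\<alpha> i)"
  defines "A \<equiv> comp_like_mat n \<alpha>"
  shows "(pos_expansive n (lin_CA n A) \<longleftrightarrow> expansive_mat A)
       \<and> (expansive_mat A \<longleftrightarrow> expansive_mat (transpose_mat A))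
       \<and> (expansive_mat (transpose_mat A) \<longleftrightarrow>
            expansive_poly ((\<Sum>i<n. Polynomial.monom (\<alpha> i) i) + Polynomial.monom 1 n))"
proof -
  interpret comp_like_CA n \<alpha> using assms(1,2) by unfold_locales
  have "0 < n" using assms(1) by simp
  let ?dominant = "(\<exists>m. top_dominant n (\<lambda>b. fls_nth (\<alpha> b)) m) \<and>
    (\<exists>L. bottom_dominant n (\<lambda>b. fls_nth (\<alpha> b)) L)"
  have "pos_expansive n (lin_CA n A) \<longleftrightarrow> lrec_expansive n (\<lambda>b. fls_nth (\<alpha> b)) exponents"
    unfolding A_def by (rule pos_expansive_iff_lrec_expansive)
  also have "\<dots> \<longleftrightarrow> ?dominant"
    by (rule lrec_expansive_iff_dominant[OF \<open>0 < n\<close> finite_exponents zero_in_exponents])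
      (rule exponents_supp)
  finally have "pos_expansive n (lin_CA n A) \<longleftrightarrow> ?dominant" .
  moreover have "expansive_mat A \<longleftrightarrow> ?dominant"
    unfolding A_def using \<open>0 < n\<close> assms(2) by (rule expansive_comp_like_mat_iff_dominant)
  moreover have "expansive_mat (transpose_mat A) \<longleftrightarrow> expansive_mat A"
    unfolding A_def by (rule expansive_mat_transpose[of _ n]) (simp add: comp_like_mat_def)
  moreover have
    "expansive_poly ((\<Sum>i<n. Polynomial.monom (\<alpha> i) i) + Polynomial.monom 1 n) \<longleftrightarrow> ?dominant"
    using expansive_poly_iff_dominant[OF \<open>0 < n\<close> assms(2)] by (simp only: add.commute)
  ultimately show ?thesis by blast
qed

end
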